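(* (i) The set of double cones of Minkowski spacetime, with the Poincaré group as symmetry group, has a covariant path-frame system. (ii) The set of nonempty open connected intervals of $S^1$ having closure different from $S^1$, with the Möbius group as symmetry group, does not have a covariant path-frame system.
   Context: Both sets are ordered by inclusion and are causal posets. Double cones: sets $s(o_R)$ with $R>0$, $o_R=\{(t,\mathbf x):|t|+|\mathbf x|<R\}$ and $s$ a proper orthochronous Poincaré transformation; $o_1\perp o_2$ iff all points of $o_1$ are spacelike separated from all points of $o_2$. For intervals of $S^1$, $\perp$ is disjointness. The symmetry group $S$ acts by $o\mapsto s(o)$; $S_a$ denotes the stabilizer of $a$. A 1-simplex is $b=(|b|;\partial_0b,\partial_1b)$ with $\partial_0b,\partial_1b\subseteq|b|$, opposite $\overline b=(|b|;\partial_1b,\partial_0b)$, $s(b)=(s(|b|);s(\partial_0b),s(\partial_1b))$. $\mathrm T_1(K)$: 1-simplices with $\partial_0b\ne|b|\ne\partial_1b$. $\mathrm F(K)$: group generated by $\mathrm T_1(K)$ with $b^{-1}=\overline b$, with $S$ acting letterwise. A path from $a$ to $o$ is a word $b_n\cdots b_1$, $b_i\in\mathrm T_1(K)$ (empty if $a=o$ allowed), with $\partial_1b_1=a$, $\partial_0b_n=o$, $\partial_0b_i=\partial_1b_{i+1}$. A path-frame $P_o$ over $o$ is a choice of a path $p_{(o,a)}$ from $o$ to $a$ for each $a\in K$ with $p_{(o,o)}=1$. A covariant path-frame system is a family $\{P_o:o\in K\}$ with $s(p_{(a,x)})=p_{(s(a),s(x))}$ for all $a,x\in K$, $s\in S$.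 *)

theory Defs
  imports "HOL-Analysis.Analysis"
begin

type_synonym 'a simplex1 = "'a set \<times> 'a set \<times> 'a set"

definition supp1 :: "'a simplex1 \<Rightarrow> 'a set" where "supp1 b = fst b"
definition bd0 :: "'a simplex1 \<Rightarrow> 'a set" where "bd0 b = fst (snd b)"
definition bd1 :: "'a simplex1 \<Rightarrow> 'a set" where "bd1 b = snd (snd b)"

definition opp1 :: "'a simplex1 \<Rightarrow> 'a simplex1" where
  "opp1 b = (supp1 b, bd1 b, bd0 b)"

definition act1 :: "('a \<Rightarrow> 'a) \<Rightarrow> 'a simplex1 \<Rightarrow> 'a simplex1" where
  "act1 s b = (s ` supp1 b, s ` bd0 b, s ` bd1 b)"

definition T1 :: "'a set set \<Rightarrow> 'a simplex1 set" where
  "T1 K = {b. supp1 b \<in> K \<and> bd0 b \<in> K \<and> bd1 b \<in> K \<and>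
              bd0 b \<subseteq> supp1 b \<and> bd1 b \<subseteq> supp1 b \<and>
              bd0 b \<noteq> supp1 b \<and> supp1 b \<noteq> bd1 b}"

text \<open>Elements of F(K) are represented by words (lists, letters in order of
  application b_1, ..., b_n); two words represent the same element iff they are
  related by the equivalence generated by cancelling adjacent pairs b, opp b
  (the relation b^{-1} = opp b).\<close>
definition cancel1 :: "'a simplex1 list \<Rightarrow> 'a simplex1 list \<Rightarrow> bool" where
  "cancel1 xs ys \<longleftrightarrow> (\<exists>u b v. xs = u @ [b, opp1 b] @ v \<and> ys = u @ v)"

definition FK_eq :: "'a simplex1 list \<Rightarrow> 'a simplex1 list \<Rightarrow> bool" where
  "FK_eq = equivclp cancel1"

text \<open>A path from a to o: word b_n ... b_1 (stored as [b_1,...,b_n]).\<close>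
definition is_path :: "'a set set \<Rightarrow> 'a set \<Rightarrow> 'a set \<Rightarrow> 'a simplex1 list \<Rightarrow> bool" where
  "is_path K a u p \<longleftrightarrow>
     set p \<subseteq> T1 K \<and>
     (p = [] \<longrightarrow> a = u) \<and>
     (p \<noteq> [] \<longrightarrow> bd1 (hd p) = a \<and> bd0 (last p) = u) \<and>
     (\<forall>i. Suc i < length p \<longrightarrow> bd0 (p ! i) = bd1 (p ! Suc i))"

definition covariant_pfs ::
  "'a set set \<Rightarrow> ('a \<Rightarrow> 'a) set \<Rightarrow> ('a set \<Rightarrow> 'a set \<Rightarrow> 'a simplex1 list) \<Rightarrow> bool" where
  "covariant_pfs K S P \<longleftrightarrow>
     (\<forall>u\<in>K. \<forall>a\<in>K. is_path K u a (P u a)) \<and>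
     (\<forall>u\<in>K. FK_eq (P u u) []) \<and>
     (\<forall>a\<in>K. \<forall>x\<in>K. \<forall>s\<in>S. FK_eq (map (act1 s) (P a x)) (P (s ` a) (s ` x)))"

definition has_covariant_pfs :: "'a set set \<Rightarrow> ('a \<Rightarrow> 'a) set \<Rightarrow> bool" where
  "has_covariant_pfs K S \<longleftrightarrow> (\<exists>P. covariant_pfs K S P)"

text \<open>Points are vectors in real^4; coordinate 1 is time, the others are space.\<close>
definition spatial_norm :: "real^4 \<Rightarrow> real" where
  "spatial_norm p = sqrt (\<Sum>i\<in>UNIV - {1}. (p $ i)\<^sup>2)"

definition mink_metric :: "real^4^4" where
  "mink_metric = (\<chi> i j. if i = j then (if i = 1 then 1 else -1) else 0)"

definition proper_orthochronous_lorentz :: "real^4^4 \<Rightarrow> bool" where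
  "proper_orthochronous_lorentz L \<longleftrightarrow>
     transpose L ** mink_metric ** L = mink_metric \<and> det L = 1 \<and> L $ 1 $ 1 \<ge> 1"

definition poincare_group :: "(real^4 \<Rightarrow> real^4) set" where
  "poincare_group = {(\<lambda>p. L *v p + c) | L c. proper_orthochronous_lorentz L}"

definition std_double_cone :: "real \<Rightarrow> (real^4) set" where
  "std_double_cone R = {p. \<bar>p $ 1\<bar> + spatial_norm p < R}"

definition double_cones :: "(real^4) set set" where
  "double_cones = {s ` std_double_cone R | s R. s \<in> poincare_group \<and> R > 0}"

definition circle :: "complex set" where "circle = sphere 0 1"

definition circle_intervals :: "complex set set" where
  "circle_intervals = {I. I \<subseteq> circle \<and> I \<noteq> {} \<and>
      openin (top_of_set circle) I \<and> connected I \<and> closure I \<noteq> circle}"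

text \<open>Moebius group of S^1: z \<mapsto> (a z + b)/(conj b z + conj a), |a|^2 - |b|^2 = 1
  (i.e. PSU(1,1) \<cong> PSL(2,R), acting on the circle).\<close>
definition moebius_group :: "(complex \<Rightarrow> complex) set" where
  "moebius_group = {(\<lambda>z. (a * z + b) / (cnj b * z + cnj a)) | a b.
                     (cmod a)\<^sup>2 - (cmod b)\<^sup>2 = 1}"

end

theory Submission
  imports Defs
begin

text \<open>(i) A double cone is point-symmetric about a unique centre, so it can be dilated about that
  centre intrinsically. Dilating u by one more than the least factor that makes it swallow a
  yields a double cone properly containing both u and a, and since Poincare transformations are
  affine this choice commutes with them. The single 1-simplex with this support and faces a, u
  is then a covariant path from u to a.

  (ii) The hyperbolic Moebius transformations fixing 1 and -1 preserve the upper and the lower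
  half circle, so covariance forces the chosen path between these two intervals to be fixed, up to
  free reduction, by all of them. By uniqueness of reduced words its reduced form is then fixed
  letterwise, and it is nonempty because it still connects two different intervals. But the only
  intervals invariant under all these transformations are the two half circles, and these are not
  properly nested, so no 1-simplex of T_1 can be fixed.\<close>

section \<open>Double cones\<close>

lemma poincare_groupE:
  assumes "s \<in> poincare_group"
  obtains L c where "invertible L" "s = (\<lambda>p. L *v p + c)"
proof -
  obtain L c where "proper_orthochronous_lorentz L" "s = (\<lambda>p. L *v p + c)"
    using assms by (auto simp: poincare_group_def)
  then show thesis
    by (intro that[of L c]) (simp_all add: proper_orthochronous_lorentz_def invertible_det_nz)
qed

lemma poincare_group_inj:
  assumes "s \<in> poincare_group"
  shows "inj s"
proof -
  obtain L c where "invertible L" "s = (\<lambda>p. L *v p + c)"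
    using assms by (rule poincare_groupE)
  then show ?thesis
    using inj_matrix_vector_mult[of L] by (simp add: inj_def)
qed

lemma spatial_norm_eq: "spatial_norm p = sqrt ((p$2)\<^sup>2 + (p$3)\<^sup>2 + (p$4)\<^sup>2)"
proof -
  have "UNIV - {1::4} = {2,3,4}" using UNIV_4 by auto
  then show ?thesis by (simp add: spatial_norm_def)
qed

lemma norm_vec4_eq: "norm (p::real^4) = sqrt ((p$1)\<^sup>2 + (p$2)\<^sup>2 + (p$3)\<^sup>2 + (p$4)\<^sup>2)"
  by (simp add: norm_vec_def L2_set_def sum_4 add.assoc)

lemma spatial_norm_le_norm: "spatial_norm p \<le> norm p"
  unfolding spatial_norm_eq norm_vec4_eq by (rule real_sqrt_le_mono) simp

lemma norm_le_time_plus_spatial_norm: "norm p \<le> \<bar>p$1\<bar> + spatial_norm p"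
proof -
  let ?S = "(p$2)\<^sup>2 + (p$3)\<^sup>2 + (p$4)\<^sup>2"
  have "sqrt ((p$1)\<^sup>2 + ?S) \<le> sqrt ((p$1)\<^sup>2) + sqrt ?S"
    by (rule sqrt_add_le_add_sqrt) simp_all
  then show ?thesis unfolding spatial_norm_eq norm_vec4_eq by (simp add: add.assoc)
qed

lemma spatial_norm_uminus: "spatial_norm (- p) = spatial_norm p"
  by (simp add: spatial_norm_eq)

lemma spatial_norm_scaleR: "spatial_norm (m *\<^sub>R p) = \<bar>m\<bar> * spatial_norm p"
proof -
  have "(m * p$2)\<^sup>2 + (m * p$3)\<^sup>2 + (m * p$4)\<^sup>2 = m\<^sup>2 * ((p$2)\<^sup>2 + (p$3)\<^sup>2 + (p$4)\<^sup>2)"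
    by (simp add: algebra_simps)
  then show ?thesis by (simp add: spatial_norm_eq real_sqrt_mult)
qed

lemma std_double_cone_uminus: "p \<in> std_double_cone R \<Longrightarrow> - p \<in> std_double_cone R"
  by (simp add: std_double_cone_def spatial_norm_uminus)

lemma zero_in_std_double_cone: "R > 0 \<Longrightarrow> 0 \<in> std_double_cone R"
  by (simp add: std_double_cone_def spatial_norm_eq)

lemma std_double_cone_scaleR:
  assumes "m > 0"
  shows "std_double_cone (R * m) = (\<lambda>p. m *\<^sub>R p) ` std_double_cone R"
proof -
  have "\<bar>(m *\<^sub>R p) $ 1\<bar> + spatial_norm (m *\<^sub>R p) = m * (\<bar>p $ 1\<bar> + spatial_norm p)" for p
    using assms by (simp add: spatial_norm_scaleR abs_mult distrib_left)
  then have scaled: "m *\<^sub>R p \<in> std_double_cone (R * m) \<longleftrightarrow> p \<in> std_double_cone R" for p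
    using assms by (simp add: std_double_cone_def mult.commute[of R])
  have "p = m *\<^sub>R (inverse m *\<^sub>R p)" for p :: "real^4"
    using assms by simp
  then show ?thesis
    using scaled by (metis (no_types, lifting) image_iff subsetI subset_antisym)
qed

lemma std_double_cone_psubset:
  assumes "0 \<le> r" "r < r'"
  shows "std_double_cone r \<subset> std_double_cone r'"
proof -
  let ?p = "\<chi> i. if i = 1 then r else (0::real)"
  have "spatial_norm ?p = 0"
    by (simp add: spatial_norm_eq)
  then have "?p \<in> std_double_cone r' - std_double_cone r"
    using assms by (simp add: std_double_cone_def)
  moreover have "std_double_cone r \<subseteq> std_double_cone r'"
    using assms by (auto simp: std_double_cone_def)
  ultimately show ?thesis
    by blast
qed

lemma bounded_std_double_cone: "bounded (std_double_cone R)"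
proof -
  have "std_double_cone R \<subseteq> cball 0 R"
  proof
    fix p assume "p \<in> std_double_cone R"
    then show "p \<in> cball 0 R"
      using norm_le_time_plus_spatial_norm[of p] by (simp add: std_double_cone_def)
  qed
  then show ?thesis using bounded_cball bounded_subset by blast
qed

lemma norm_bound_in_std_double_cone: "norm p \<le> B \<Longrightarrow> 2 * B < R \<Longrightarrow> p \<in> std_double_cone R"
  using component_le_norm_cart[of p 1] spatial_norm_le_norm[of p]
  by (simp add: std_double_cone_def)

lemma bounded_affine_image:
  fixes X :: "(real^'n) set" and A :: "real^'n^'m"
  shows "bounded X \<Longrightarrow> bounded ((\<lambda>p. A *v p + c) ` X)"
  using bounded_translation[OF bounded_linear_image[of X "(*v) A"], of c]
  by (simp add: image_image add.commute[of c])

definition symmetry_centre :: "'a::real_vector set \<Rightarrow> 'a" where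
  "symmetry_centre D = (THE c. \<forall>y\<in>D. 2 *\<^sub>R c - y \<in> D)"

definition dilate :: "'a::real_vector set \<Rightarrow> real \<Rightarrow> 'a set" where
  "dilate D m = (\<lambda>y. symmetry_centre D + m *\<^sub>R (y - symmetry_centre D)) ` D"

text \<open>The product of the point reflections in c and c' is the translation by 2 (c - c'),
  so a nonempty set symmetric about both is invariant under it, hence unbounded unless c = c'.\<close>
lemma bounded_point_symmetric_centre_unique:
  fixes D :: "'a::real_normed_vector set"
  assumes "bounded D" "y \<in> D"
    and "\<forall>y\<in>D. 2 *\<^sub>R c - y \<in> D" "\<forall>y\<in>D. 2 *\<^sub>R c' - y \<in> D"
  shows "c = c'"
proof (rule ccontr)
  assume "c \<noteq> c'"
  define v where "v = 2 *\<^sub>R (c - c')"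
  have v: "norm v > 0" using \<open>c \<noteq> c'\<close> by (simp add: v_def)
  have translate: "y + real n *\<^sub>R v \<in> D" for n
  proof (induction n)
    case 0
    then show ?case using assms(2) by simp
  next
    case (Suc n)
    then have "2 *\<^sub>R c - (2 *\<^sub>R c' - (y + real n *\<^sub>R v)) \<in> D"
      using assms(3,4) by blast
    moreover have "2 *\<^sub>R c - (2 *\<^sub>R c' - (y + real n *\<^sub>R v)) = y + real (Suc n) *\<^sub>R v"
      by (simp add: v_def algebra_simps)
    ultimately show ?case by simp
  qed
  obtain B where B: "\<forall>x\<in>D. norm x \<le> B" using assms(1) bounded_iff by blast
  obtain n :: nat where "(B + norm y) / norm v < real n" using reals_Archimedean2 by blast
  then have "B + norm y < norm (real n *\<^sub>R v)" using v by (simp add: divide_less_eq)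
  also have "\<dots> \<le> norm (y + real n *\<^sub>R v) + norm y"
    by (metis add_diff_cancel_left' norm_triangle_ineq4)
  finally have "B < norm (y + real n *\<^sub>R v)" by simp
  then show False using B translate by (meson not_le)
qed

lemma symmetry_centre_eqI:
  fixes D :: "'a::real_normed_vector set"
  assumes "bounded D" "D \<noteq> {}" "\<forall>y\<in>D. 2 *\<^sub>R c - y \<in> D"
  shows "symmetry_centre D = c"
  unfolding symmetry_centre_def
proof (rule the_equality)
  fix c' assume "\<forall>y\<in>D. 2 *\<^sub>R c' - y \<in> D"
  then show "c' = c"
    using assms bounded_point_symmetric_centre_unique by blast
qed (use assms in blast)

lemma dilate_one [simp]: "dilate D 1 = D"
  by (simp add: dilate_def)

lemma symmetry_centre_affine_std_double_cone:
  assumes "R > 0"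
  shows "symmetry_centre ((\<lambda>p. A *v p + b) ` std_double_cone R) = b" (is "symmetry_centre ?D = b")
proof (rule symmetry_centre_eqI)
  show "bounded ?D"
    by (rule bounded_affine_image[OF bounded_std_double_cone])
  show "?D \<noteq> {}"
    using zero_in_std_double_cone[OF assms] by blast
  show "\<forall>y\<in>?D. 2 *\<^sub>R b - y \<in> ?D"
  proof
    fix y assume "y \<in> ?D"
    then obtain p where p: "p \<in> std_double_cone R" "y = A *v p + b" by blast
    have "2 *\<^sub>R b - y = A *v (- p) + b"
      using matrix_vector_mult_diff_distrib[of A 0 p] p(2) by (simp add: scaleR_2)
    then show "2 *\<^sub>R b - y \<in> ?D"
      using std_double_cone_uminus[OF p(1)] by blast
  qed
qed

lemma dilate_affine_std_double_cone:
  assumes "R > 0" "m > 0"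
  shows "dilate ((\<lambda>p. A *v p + b) ` std_double_cone R) m = (\<lambda>p. A *v p + b) ` std_double_cone (R * m)"
proof -
  have "dilate ((\<lambda>p. A *v p + b) ` std_double_cone R) m = (\<lambda>p. b + m *\<^sub>R (A *v p)) ` std_double_cone R"
    unfolding dilate_def symmetry_centre_affine_std_double_cone[OF assms(1)] image_image by simp
  also have "\<dots> = (\<lambda>p. A *v (m *\<^sub>R p) + b) ` std_double_cone R"
    by (simp only: matrix_vector_mult_scaleR add.commute)
  also have "\<dots> = (\<lambda>p. A *v p + b) ` std_double_cone (R * m)"
    by (simp only: std_double_cone_scaleR[OF assms(2)] image_image)
  finally show ?thesis .
qed

lemma double_coneE:
  assumes "u \<in> double_cones"
  obtains L c R where "invertible L" "R > 0" "u = (\<lambda>p. L *v p + c) ` std_double_cone R"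
proof -
  obtain s R where s: "s \<in> poincare_group" and "R > 0" "u = s ` std_double_cone R"
    using assms by (auto simp: double_cones_def)
  moreover obtain L c where "invertible L" "s = (\<lambda>p. L *v p + c)"
    using s by (rule poincare_groupE)
  ultimately show thesis
    by (intro that[of L R c]) simp_all
qed

lemma dilate_double_cone:
  assumes "u \<in> double_cones" "m > 0"
  shows "dilate u m \<in> double_cones"
proof -
  obtain s R where s: "s \<in> poincare_group" and R: "R > 0" and u: "u = s ` std_double_cone R"
    using assms by (auto simp: double_cones_def)
  obtain L c where "s = (\<lambda>p. L *v p + c)"
    using s by (auto simp: poincare_group_def)
  then have "dilate u m = s ` std_double_cone (R * m)"
    using R assms(2) by (simp add: u dilate_affine_std_double_cone)
  then show ?thesis
    unfolding double_cones_def using s R assms(2) mult_pos_pos by blast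
qed

lemma dilate_psubset:
  assumes "u \<in> double_cones" "0 < m" "m < m'"
  shows "dilate u m \<subset> dilate u m'"
proof -
  obtain L c R where L: "invertible L" and R: "R > 0"
    and u: "u = (\<lambda>p. L *v p + c) ` std_double_cone R"
    using assms(1) by (rule double_coneE)
  have "inj (\<lambda>p. L *v p + c)"
    using inj_matrix_vector_mult[OF L] by (simp add: inj_def)
  moreover have "std_double_cone (R * m) \<subset> std_double_cone (R * m')"
    using assms(2,3) R by (intro std_double_cone_psubset) simp_all
  ultimately have "(\<lambda>p. L *v p + c) ` std_double_cone (R * m) \<subset> (\<lambda>p. L *v p + c) ` std_double_cone (R * m')"
    by (metis image_strict_mono inj_on_subset subset_UNIV)
  then show ?thesis
    using assms(2,3) R by (simp add: u dilate_affine_std_double_cone)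
qed

lemma dilate_poincare_image:
  assumes "u \<in> double_cones" "t \<in> poincare_group" "m > 0"
  shows "dilate (t ` u) m = t ` dilate u m"
proof -
  obtain L c R where R: "R > 0" and u: "u = (\<lambda>p. L *v p + c) ` std_double_cone R"
    using assms(1) by (rule double_coneE)
  obtain M d where t: "t = (\<lambda>p. M *v p + d)"
    using assms(2) by (rule poincare_groupE)
  have "t (L *v p + c) = (M ** L) *v p + (M *v c + d)" for p
    unfolding t by (simp add: matrix_vector_right_distrib matrix_vector_mul_assoc add.assoc)
  then have image: "t ` (\<lambda>p. L *v p + c) ` S = (\<lambda>p. (M ** L) *v p + (M *v c + d)) ` S" for S
    by (simp add: image_image)
  have "dilate (t ` u) m = (\<lambda>p. (M ** L) *v p + (M *v c + d)) ` std_double_cone (R * m)"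
    using R assms(3) by (simp only: u image dilate_affine_std_double_cone)
  also have "\<dots> = t ` dilate u m"
    using R assms(3) by (simp only: u image dilate_affine_std_double_cone)
  finally show ?thesis .
qed

lemma double_cone_absorbed_by_dilate:
  assumes "u \<in> double_cones" "a \<in> double_cones"
  shows "\<exists>m\<ge>1. a \<subseteq> dilate u m"
proof -
  obtain L c R where L: "invertible L" and R: "R > 0"
    and u: "u = (\<lambda>p. L *v p + c) ` std_double_cone R"
    using assms(1) by (rule double_coneE)
  obtain L' where L': "L ** L' = mat 1"
    using L by (auto simp: invertible_def)
  let ?pullback = "\<lambda>y. L' *v y + - (L' *v c)"
  obtain M d R' where a: "a = (\<lambda>p. M *v p + d) ` std_double_cone R'"
    using assms(2) by (rule double_coneE)
  have "bounded (?pullback ` a)"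
    unfolding a by (intro bounded_affine_image bounded_std_double_cone)
  then obtain B where B: "\<forall>x\<in>?pullback ` a. norm x \<le> B"
    by (auto simp: bounded_iff)
  define m where "m = max 1 ((2 * \<bar>B\<bar> + 1) / R)"
  have m: "m \<ge> 1" "m > 0" by (simp_all add: m_def)
  have "a \<subseteq> (\<lambda>p. L *v p + c) ` std_double_cone (R * m)"
  proof
    fix y assume "y \<in> a"
    then have "norm (?pullback y) \<le> \<bar>B\<bar>"
      using B by (meson abs_ge_self image_eqI order_trans)
    moreover have "2 * \<bar>B\<bar> < R * m"
      using R by (simp add: m_def field_simps max_def)
    ultimately have "?pullback y \<in> std_double_cone (R * m)"
      by (rule norm_bound_in_std_double_cone)
    moreover have "L *v ?pullback y + c = y"
      using matrix_vector_mult_diff_distrib[of L "L' *v y" "L' *v c"]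
      by (simp add: matrix_vector_mul_assoc L')
    ultimately show "y \<in> (\<lambda>p. L *v p + c) ` std_double_cone (R * m)"
      by (metis image_eqI)
  qed
  then have "a \<subseteq> dilate u m"
    using R m by (simp add: u dilate_affine_std_double_cone)
  then show ?thesis
    using m by blast
qed

text \<open>The least factor by which u must be dilated to contain a, plus one so that both
  inclusions become proper.\<close>
definition enclosing_cone :: "(real^4) set \<Rightarrow> (real^4) set \<Rightarrow> (real^4) set" where
  "enclosing_cone u a = dilate u (Inf {m. 1 \<le> m \<and> a \<subseteq> dilate u m} + 1)"

lemma enclosing_cone:
  assumes "u \<in> double_cones" "a \<in> double_cones"
  shows "enclosing_cone u a \<in> double_cones" "u \<subset> enclosing_cone u a" "a \<subset> enclosing_cone u a"
proof -
  let ?S = "{m. 1 \<le> m \<and> a \<subseteq> dilate u m}"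
  have S: "?S \<noteq> {}" "bdd_below ?S"
    using double_cone_absorbed_by_dilate[OF assms] by (auto intro: bdd_belowI[of _ 1])
  define M where "M = Inf ?S + 1"
  have "Inf ?S \<ge> 1"
    using S(1) by (auto intro: cInf_greatest)
  then have "M > 1" by (simp add: M_def)
  then show "enclosing_cone u a \<in> double_cones"
    using assms(1) by (simp add: enclosing_cone_def M_def dilate_double_cone)
  show "u \<subset> enclosing_cone u a"
    using dilate_psubset[OF assms(1), of 1 M] \<open>M > 1\<close> by (simp add: enclosing_cone_def M_def)
  have "Inf ?S < M" by (simp add: M_def)
  then obtain m0 where "m0 \<in> ?S" "m0 < M"
    using cInf_less_iff[OF S] by blast
  then show "a \<subset> enclosing_cone u a"
    using dilate_psubset[OF assms(1), of m0 M] by (auto simp: enclosing_cone_def M_def)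
qed

lemma enclosing_cone_poincare_image:
  assumes "u \<in> double_cones" "a \<in> double_cones" "t \<in> poincare_group"
  shows "enclosing_cone (t ` u) (t ` a) = t ` enclosing_cone u a"
proof -
  have inj: "inj t" using assms(3) by (rule poincare_group_inj)
  have "{m. 1 \<le> m \<and> t ` a \<subseteq> dilate (t ` u) m} = {m. 1 \<le> m \<and> a \<subseteq> dilate u m}"
    using dilate_poincare_image[OF assms(1,3)] inj_image_subset_iff[OF inj] by auto
  moreover have "Inf {m. 1 \<le> m \<and> a \<subseteq> dilate u m} \<ge> 1"
    using double_cone_absorbed_by_dilate[OF assms(1,2)] by (auto intro: cInf_greatest)
  ultimately show ?thesis
    by (simp add: enclosing_cone_def dilate_poincare_image[OF assms(1,3)])
qed

definition cone_path :: "(real^4) set \<Rightarrow> (real^4) set \<Rightarrow> (real^4) simplex1 list" where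
  "cone_path u a = (if u = a then [] else [(enclosing_cone u a, a, u)])"

theorem double_cones_covariant_pfs: "has_covariant_pfs double_cones poincare_group"
  unfolding has_covariant_pfs_def covariant_pfs_def
proof (intro exI[of _ cone_path] conjI ballI)
  fix u a assume "u \<in> double_cones" "a \<in> double_cones"
  then show "is_path double_cones u a (cone_path u a)"
    using enclosing_cone[of u a]
    by (auto simp: cone_path_def is_path_def T1_def supp1_def bd0_def bd1_def)
next
  fix u show "FK_eq (cone_path u u) []"
    by (simp add: cone_path_def FK_eq_def)
next
  fix u a s assume "u \<in> double_cones" "a \<in> double_cones" "s \<in> poincare_group"
  moreover have "s ` u = s ` a \<longleftrightarrow> u = a"
    using poincare_group_inj[OF \<open>s \<in> poincare_group\<close>] by (rule inj_image_eq_iff)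
  ultimately have "map (act1 s) (cone_path u a) = cone_path (s ` u) (s ` a)"
    by (simp add: cone_path_def act1_def supp1_def bd0_def bd1_def enclosing_cone_poincare_image)
  then show "FK_eq (map (act1 s) (cone_path u a)) (cone_path (s ` u) (s ` a))"
    by (simp add: FK_eq_def)
qed

section \<open>Free reduction of paths\<close>

lemma opp1_opp1 [simp]: "opp1 (opp1 b) = b"
  by (simp add: opp1_def supp1_def bd0_def bd1_def)

lemma bd0_opp1 [simp]: "bd0 (opp1 b) = bd1 b" and bd1_opp1 [simp]: "bd1 (opp1 b) = bd0 b"
  by (simp_all add: opp1_def bd0_def bd1_def)

text \<open>Free reduction with a stack: the reduced word is accumulated in reverse order.\<close>
definition reduce_push :: "'a simplex1 \<Rightarrow> 'a simplex1 list \<Rightarrow> 'a simplex1 list" where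
  "reduce_push b st = (case st of [] \<Rightarrow> [b] | c # r \<Rightarrow> if b = opp1 c then r else b # st)"

definition reduce :: "'a simplex1 list \<Rightarrow> 'a simplex1 list" where
  "reduce w = fold reduce_push w []"

fun reduced_stack :: "'a simplex1 list \<Rightarrow> bool" where
  "reduced_stack (c # d # r) \<longleftrightarrow> c \<noteq> opp1 d \<and> reduced_stack (d # r)"
| "reduced_stack _ \<longleftrightarrow> True"

lemma reduced_stack_push: "reduced_stack st \<Longrightarrow> reduced_stack (reduce_push b st)"
  by (cases st rule: reduced_stack.cases) (auto simp: reduce_push_def)

lemma reduced_stack_fold: "reduced_stack st \<Longrightarrow> reduced_stack (fold reduce_push w st)"
  by (induction w arbitrary: st) (auto simp: reduced_stack_push)

lemma reduce_push_opp1: "reduced_stack st \<Longrightarrow> reduce_push (opp1 b) (reduce_push b st) = st"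
  by (cases st rule: reduced_stack.cases) (auto simp: reduce_push_def)

lemma reduce_FK_eq:
  assumes "FK_eq xs ys"
  shows "reduce xs = reduce ys"
proof -
  have step: "reduce v = reduce v'" if cancel: "cancel1 v v'" for v v' :: "'a simplex1 list"
  proof -
    obtain u b q where "v = u @ [b, opp1 b] @ q" "v' = u @ q"
      using cancel unfolding cancel1_def by blast
    moreover have "reduced_stack (fold reduce_push u [])"
      by (rule reduced_stack_fold) simp
    ultimately show ?thesis
      by (simp add: reduce_def reduce_push_opp1)
  qed
  from assms show ?thesis
    unfolding FK_eq_def by (induction rule: equivclp_induct) (metis step)+
qed

lemma set_reduce_push: "set (reduce_push b st) \<subseteq> insert b (set st)"
  by (auto simp: reduce_push_def split: list.splits)

lemma set_fold_reduce_push: "set (fold reduce_push w st) \<subseteq> set st \<union> set w"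
  by (induction w arbitrary: st) (use set_reduce_push in fastforce)+

lemma set_reduce: "set (reduce w) \<subseteq> set w"
  unfolding reduce_def using set_fold_reduce_push[of w "[]"] by simp

lemma reduce_map:
  assumes inj: "inj_on f D" and opp: "\<And>b. f (opp1 b) = opp1 (f b)"
    and D: "\<And>b. b \<in> D \<Longrightarrow> opp1 b \<in> D" "set w \<subseteq> D"
  shows "reduce (map f w) = map f (reduce w)"
proof -
  have push: "reduce_push (f b) (map f st) = map f (reduce_push b st)"
    if "b \<in> D" "set st \<subseteq> D" for b st
  proof (cases st)
    case (Cons c r)
    then have "c \<in> D" using that(2) by simp
    have "f b = opp1 (f c) \<longleftrightarrow> f b = f (opp1 c)" by (simp add: opp)
    also have "\<dots> \<longleftrightarrow> b = opp1 c" using inj_on_eq_iff[OF inj that(1) D(1)[OF \<open>c \<in> D\<close>]] .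
    finally show ?thesis using Cons by (simp add: reduce_push_def)
  qed (simp add: reduce_push_def)
  have "fold reduce_push (map f w) (map f st) = map f (fold reduce_push w st)"
    if "set st \<subseteq> D" "set w \<subseteq> D" for w st
    using that
  proof (induction w arbitrary: st)
    case (Cons b w)
    then have "b \<in> D" "set (reduce_push b st) \<subseteq> D"
      using set_reduce_push[of b st] by auto
    then show ?case
      using Cons push by simp
  qed simp
  from this[of "[]" w] show ?thesis
    using D(2) by (simp add: reduce_def)
qed

lemma act1_opp1: "act1 f (opp1 b) = opp1 (act1 f b)"
  by (simp add: act1_def opp1_def supp1_def bd0_def bd1_def)

lemma inj_on_act1:
  assumes "inj_on f X"
  shows "inj_on (act1 f) {b. supp1 b \<subseteq> X \<and> bd0 b \<subseteq> X \<and> bd1 b \<subseteq> X}"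
proof (rule inj_onI)
  fix b c assume "b \<in> {b. supp1 b \<subseteq> X \<and> bd0 b \<subseteq> X \<and> bd1 b \<subseteq> X}"
    "c \<in> {b. supp1 b \<subseteq> X \<and> bd0 b \<subseteq> X \<and> bd1 b \<subseteq> X}" "act1 f b = act1 f c"
  then have "supp1 b = supp1 c" "bd0 b = bd0 c" "bd1 b = bd1 c"
    using inj_on_image_eq_iff[OF assms] by (auto simp: act1_def)
  then show "b = c"
    by (simp add: supp1_def bd0_def bd1_def prod_eq_iff)
qed

lemma reduce_fixed_by_act1:
  assumes "inj_on g X" "set w \<subseteq> {b. supp1 b \<subseteq> X \<and> bd0 b \<subseteq> X \<and> bd1 b \<subseteq> X}"
    and "FK_eq (map (act1 g) w) w"
  shows "map (act1 g) (reduce w) = reduce w"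
proof -
  have "reduce (map (act1 g) w) = map (act1 g) (reduce w)"
    using inj_on_act1[OF assms(1)] assms(2)
    by (intro reduce_map act1_opp1) (auto simp: opp1_def supp1_def bd0_def bd1_def)
  then show ?thesis
    using reduce_FK_eq[OF assms(3)] by simp
qed

fun walk_end :: "'a set \<Rightarrow> 'a simplex1 list \<Rightarrow> 'a set option" where
  "walk_end x [] = Some x"
| "walk_end x (b # bs) = (if bd1 b = x then walk_end (bd0 b) bs else None)"

lemma walk_end_append:
  "walk_end x (xs @ ys) = (case walk_end x xs of None \<Rightarrow> None | Some y \<Rightarrow> walk_end y ys)"
  by (induction xs arbitrary: x) auto

lemma is_path_ConsD:
  assumes p: "is_path K a u (b # bs)"
  shows "bd1 b = a" "is_path K (bd0 b) u bs"
proof -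
  show "bd1 b = a" using p by (simp add: is_path_def)
  have chain: "bd0 ((b # bs) ! i) = bd1 ((b # bs) ! Suc i)" if "Suc i < length (b # bs)" for i
    using p that by (simp add: is_path_def)
  show "is_path K (bd0 b) u bs"
  proof (cases bs)
    case Nil
    then show ?thesis using p by (simp add: is_path_def)
  next
    case (Cons c cs)
    have "bd0 (bs ! i) = bd1 (bs ! Suc i)" if "Suc i < length bs" for i
      using chain[of "Suc i"] that by simp
    moreover have "bd1 c = bd0 b"
      using chain[of 0] Cons by simp
    ultimately show ?thesis
      using p Cons by (simp add: is_path_def)
  qed
qed

lemma is_path_walk_end: "is_path K a u p \<Longrightarrow> walk_end a p = Some u"
proof (induction p arbitrary: a)
  case Nil
  then show ?case by (simp add: is_path_def)
next
  case (Cons b bs)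
  then show ?case using is_path_ConsD[OF Cons.prems] by simp
qed

lemma walk_end_reduce_push:
  assumes "walk_end a (rev st) = Some (bd1 b)"
  shows "walk_end a (rev (reduce_push b st)) = Some (bd0 b)"
proof (cases st)
  case (Cons c r)
  then show ?thesis
    using assms by (auto simp: reduce_push_def walk_end_append split: option.splits if_splits)
qed (use assms in \<open>simp add: reduce_push_def\<close>)

lemma walk_end_reduce:
  assumes "walk_end a w = Some u"
  shows "walk_end a (rev (reduce w)) = Some u"
proof -
  have "walk_end a (rev st) = Some y \<Longrightarrow> walk_end y w = Some u \<Longrightarrow>
        walk_end a (rev (fold reduce_push w st)) = Some u" for st y
  proof (induction w arbitrary: st y)
    case (Cons b w)
    then show ?case by (auto simp: walk_end_reduce_push split: if_splits)
  qed simp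
  from this[of "[]"] assms show ?thesis by (simp add: reduce_def)
qed

lemma reduce_path_nonempty:
  assumes "is_path K a u p" "a \<noteq> u"
  shows "reduce p \<noteq> []"
  using walk_end_reduce[OF is_path_walk_end[OF assms(1)]] assms(2) by auto

section \<open>Dilation-invariant intervals of the circle\<close>

definition half_circle :: "real \<Rightarrow> complex set" where
  "half_circle \<sigma> = {z \<in> circle. 0 < \<sigma> * Im z}"

definition cayley :: "complex \<Rightarrow> complex" where
  "cayley z = (1 + z) / (1 - z)"

text \<open>The hyperbolic element of the Moebius group fixing 1 and -1; the Cayley map
  conjugates it to multiplication by k.\<close>
definition circle_dilation :: "real \<Rightarrow> complex \<Rightarrow> complex" where
  "circle_dilation k z =
     (of_real (k + 1) * z + of_real (k - 1)) / (of_real (k - 1) * z + of_real (k + 1))"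

lemma Re_cayley: "Re (cayley z) = (1 - (Re z)\<^sup>2 - (Im z)\<^sup>2) / ((1 - Re z)\<^sup>2 + (Im z)\<^sup>2)"
  by (simp add: cayley_def Re_divide power2_eq_square algebra_simps)

lemma Im_cayley: "Im (cayley z) = 2 * Im z / ((1 - Re z)\<^sup>2 + (Im z)\<^sup>2)"
  by (simp add: cayley_def Im_divide power2_eq_square algebra_simps)

lemma cayley_denominator_pos:
  assumes "z \<noteq> 1"
  shows "(1 - Re z)\<^sup>2 + (Im z)\<^sup>2 > 0"
proof -
  have "(cmod (1 - z))\<^sup>2 > 0" using assms by simp
  then show ?thesis by (simp only: cmod_power2) simp
qed

lemma circle_iff: "z \<in> circle \<longleftrightarrow> (Re z)\<^sup>2 + (Im z)\<^sup>2 = 1"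
proof -
  have "z \<in> circle \<longleftrightarrow> (cmod z)\<^sup>2 = 1\<^sup>2"
    using power2_eq_iff_nonneg[of "cmod z" 1] by (simp add: circle_def)
  then show ?thesis by (simp add: cmod_power2)
qed

lemma cayley_circle_iff:
  assumes "z \<noteq> 1"
  shows "z \<in> circle \<longleftrightarrow> Re (cayley z) = 0"
proof -
  have "Re (cayley z) = 0 \<longleftrightarrow> 1 - (Re z)\<^sup>2 - (Im z)\<^sup>2 = 0"
    using cayley_denominator_pos[OF assms] by (auto simp: Re_cayley)
  then show ?thesis
    unfolding circle_iff by arith
qed

lemma cayley_sign_Im: "z \<noteq> 1 \<Longrightarrow> 0 < \<sigma> * Im (cayley z) \<longleftrightarrow> 0 < \<sigma> * Im z"
  using cayley_denominator_pos[of z]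
  by (simp add: Im_cayley zero_less_mult_iff zero_less_divide_iff)

lemma cayley_inj:
  assumes "z \<noteq> 1" "w \<noteq> 1" "cayley z = cayley w"
  shows "z = w"
proof -
  have "(1 + z) * (1 - w) = (1 + w) * (1 - z)"
    using assms by (simp add: cayley_def frac_eq_eq)
  then have "2 * z = 2 * w" by algebra
  then show ?thesis by simp
qed

lemma circle_dilation_denominator_nonzero:
  assumes "k > 0" "z \<in> circle"
  shows "of_real (k - 1) * z + of_real (k + 1) \<noteq> 0"
proof
  assume "of_real (k - 1) * z + of_real (k + 1) = 0"
  then have "cmod (of_real (k - 1) * z) = cmod (of_real (k + 1) :: complex)"
    by (metis add_eq_0_iff norm_minus_cancel)
  then have "\<bar>k - 1\<bar> = \<bar>k + 1\<bar>"
    using assms(2) by (simp only: norm_mult norm_of_real) (simp add: circle_def)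
  then show False using assms(1) by (simp add: abs_if split: if_splits)
qed

lemma cayley_circle_dilation:
  assumes "k > 0" "z \<in> circle" "z \<noteq> 1"
  shows "circle_dilation k z \<noteq> 1" "cayley (circle_dilation k z) = of_real k * cayley z"
proof -
  define n where "n = of_real (k + 1) * z + of_real (k - 1)"
  define d where "d = of_real (k - 1) * z + of_real (k + 1)"
  have d: "d \<noteq> 0"
    unfolding d_def by (rule circle_dilation_denominator_nonzero[OF assms(1,2)])
  have diff: "d - n = 2 * (1 - z)" and sum: "d + n = 2 * (of_real k * (1 + z))"
    by (simp_all add: d_def n_def algebra_simps)
  have dn: "d - n \<noteq> 0"
    using assms(3) by (simp add: diff)
  have "(d + n) / (d - n) = (2 * (of_real k * (1 + z))) / (2 * (1 - z))"
    by (simp only: diff sum)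
  also have "\<dots> = of_real k * cayley z"
    by (simp only: mult_divide_mult_cancel_left_if) (simp add: cayley_def)
  finally have quotient: "(d + n) / (d - n) = of_real k * cayley z" .
  have D: "circle_dilation k z = n / d"
    by (simp add: circle_dilation_def n_def d_def)
  show "circle_dilation k z \<noteq> 1"
    using d dn by (simp add: D)
  have "1 + n / d = (d + n) / d" "1 - n / d = (d - n) / d"
    using d by (simp_all add: field_simps)
  then have "cayley (n / d) = (d + n) / (d - n)"
    using d by (simp add: cayley_def)
  then show "cayley (circle_dilation k z) = of_real k * cayley z"
    using quotient by (simp add: D)
qed

lemma circle_dilation_circle:
  assumes "k > 0" "z \<in> circle" "z \<noteq> 1"
  shows "circle_dilation k z \<in> circle" "0 < \<sigma> * Im (circle_dilation k z) \<longleftrightarrow> 0 < \<sigma> * Im z"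
proof -
  note w = cayley_circle_dilation[OF assms]
  have "Re (cayley (circle_dilation k z)) = k * Re (cayley z)"
    "Im (cayley (circle_dilation k z)) = k * Im (cayley z)"
    by (simp_all add: w(2))
  then show "circle_dilation k z \<in> circle" "0 < \<sigma> * Im (circle_dilation k z) \<longleftrightarrow> 0 < \<sigma> * Im z"
    using assms cayley_circle_iff[of z] cayley_circle_iff[OF w(1)]
      cayley_sign_Im[of z \<sigma>] cayley_sign_Im[OF w(1), of \<sigma>]
    by (simp_all add: zero_less_mult_iff mult.left_commute[of \<sigma> k])
qed

lemma half_circle_not_one: "z \<in> half_circle \<sigma> \<Longrightarrow> z \<noteq> 1"
  by (auto simp: half_circle_def)

lemma circle_dilation_one: "k > 0 \<Longrightarrow> circle_dilation k 1 = 1"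
  by (simp add: circle_dilation_def add.commute)

lemma circle_dilation_inverse:
  assumes "k > 0" "z \<in> circle" "z \<noteq> 1"
  shows "circle_dilation k (circle_dilation (1 / k) z) = z"
proof -
  have k': "1 / k > 0" using assms(1) by simp
  note w = circle_dilation_circle(1)[OF k' assms(2,3)] cayley_circle_dilation[OF k' assms(2,3)]
  have "cayley (circle_dilation k (circle_dilation (1 / k) z)) = cayley z"
    using cayley_circle_dilation(2)[OF assms(1) w(1,2)] w(3) assms(1) by simp
  then show ?thesis
    using cayley_inj cayley_circle_dilation(1)[OF assms(1) w(1,2)] assms(3) by blast
qed

lemma circle_dilation_half_circle:
  assumes "k > 0"
  shows "circle_dilation k ` half_circle \<sigma> = half_circle \<sigma>"
proof
  show "circle_dilation k ` half_circle \<sigma> \<subseteq> half_circle \<sigma>"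
    using circle_dilation_circle[OF assms] half_circle_not_one by (auto simp: half_circle_def)
  show "half_circle \<sigma> \<subseteq> circle_dilation k ` half_circle \<sigma>"
  proof
    fix z assume z: "z \<in> half_circle \<sigma>"
    then have "z \<in> circle" "z \<noteq> 1"
      by (auto simp: half_circle_def)
    moreover have "1 / k > 0" using assms by simp
    ultimately have "circle_dilation (1 / k) z \<in> half_circle \<sigma>"
      using z circle_dilation_circle by (auto simp: half_circle_def)
    then show "z \<in> circle_dilation k ` half_circle \<sigma>"
      using circle_dilation_inverse[OF assms \<open>z \<in> circle\<close> \<open>z \<noteq> 1\<close>] by (metis image_eqI)
  qed
qed

lemma circle_dilation_transitive:
  assumes "z \<in> half_circle \<sigma>" "w \<in> half_circle \<sigma>"
  shows "\<exists>k>0. circle_dilation k z = w"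
proof -
  have z: "z \<in> circle" "z \<noteq> 1" and w: "w \<in> circle" "w \<noteq> 1"
    using assms by (auto simp: half_circle_def)
  have "0 < \<sigma> * Im (cayley z)" "0 < \<sigma> * Im (cayley w)"
    using assms cayley_sign_Im z(2) w(2) by (auto simp: half_circle_def)
  then have "Im (cayley w) / Im (cayley z) > 0" and Im_z: "Im (cayley z) \<noteq> 0"
    by (auto simp: zero_less_mult_iff zero_less_divide_iff)
  moreover define k where "k = Im (cayley w) / Im (cayley z)"
  ultimately have k: "k > 0" by simp
  have "Re (cayley z) = 0" "Re (cayley w) = 0"
    using cayley_circle_iff z w by auto
  then have "of_real k * cayley z = cayley w"
    using Im_z by (simp add: complex_eq_iff k_def)
  then have "circle_dilation k z = w"
    using cayley_inj cayley_circle_dilation[OF k z] w(2) by metis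
  with k show ?thesis by blast
qed

lemma inj_on_circle_dilation:
  assumes "k > 0"
  shows "inj_on (circle_dilation k) circle"
proof (rule inj_onI)
  fix z w assume zw: "z \<in> circle" "w \<in> circle" "circle_dilation k z = circle_dilation k w"
  show "z = w"
  proof (cases "z = 1 \<or> w = 1")
    case True
    then show ?thesis
      using zw circle_dilation_one[OF assms] cayley_circle_dilation(1)[OF assms] by metis
  next
    case False
    then have "of_real k * cayley z = of_real k * cayley w"
      using zw cayley_circle_dilation(2)[OF assms] by metis
    then show ?thesis
      using assms False cayley_inj by simp
  qed
qed

lemma circle_dilation_moebius:
  assumes "k > 0"
  shows "circle_dilation k \<in> moebius_group"
proof -
  define c where "c = 1 / (2 * sqrt k)"
  have c: "c \<noteq> 0" "c\<^sup>2 * 4 * k = 1"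
    using assms by (simp_all add: c_def power_divide)
  have "(cmod (of_real (c * (k + 1))))\<^sup>2 - (cmod (of_real (c * (k - 1))))\<^sup>2 =
      (c * (k + 1))\<^sup>2 - (c * (k - 1))\<^sup>2"
    by (simp only: norm_of_real power2_abs)
  also have "\<dots> = c\<^sup>2 * 4 * k"
    by (simp add: power2_eq_square algebra_simps)
  finally have "(cmod (of_real (c * (k + 1))))\<^sup>2 - (cmod (of_real (c * (k - 1))))\<^sup>2 = 1"
    using c(2) by simp
  moreover have "circle_dilation k =
      (\<lambda>z. (of_real (c * (k + 1)) * z + of_real (c * (k - 1))) /
           (cnj (of_real (c * (k - 1))) * z + cnj (of_real (c * (k + 1)))))"
    using c(1) by (simp add: fun_eq_iff circle_dilation_def mult.assoc
        flip: distrib_left mult_divide_mult_cancel_left)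
  ultimately show ?thesis
    unfolding moebius_group_def by blast
qed

lemma half_circle_exp_image:
  assumes "\<sigma> \<in> {-1, 1}"
  shows "half_circle \<sigma> = (\<lambda>t. exp (\<i> * of_real (\<sigma> * t))) ` {0<..<pi}"
proof
  have \<sigma>: "\<sigma> * \<sigma> = 1" using assms by auto
  show "(\<lambda>t. exp (\<i> * of_real (\<sigma> * t))) ` {0<..<pi} \<subseteq> half_circle \<sigma>"
  proof clarify
    fix t :: real assume "t \<in> {0<..<pi}"
    then have "sin t > 0" by (simp add: sin_gt_zero)
    moreover have "\<sigma> * sin (\<sigma> * t) = sin t"
      using assms by auto
    ultimately show "exp (\<i> * of_real (\<sigma> * t)) \<in> half_circle \<sigma>"
      by (simp add: half_circle_def circle_def Im_exp)
  qed
  show "half_circle \<sigma> \<subseteq> (\<lambda>t. exp (\<i> * of_real (\<sigma> * t))) ` {0<..<pi}"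
  proof
    fix z assume z: "z \<in> half_circle \<sigma>"
    have "\<sigma> * Arg z \<in> {0<..<pi}"
      using assms z Arg_lt_pi[of z] Arg_neg_iff[of z] mpi_less_Arg[of z]
      by (auto simp: half_circle_def)
    moreover have "exp (\<i> * of_real (\<sigma> * (\<sigma> * Arg z))) = z"
      using z complex_norm_eq_1_exp_eq[of z]
      by (simp add: half_circle_def circle_def \<sigma> flip: mult.assoc)
    ultimately show "z \<in> (\<lambda>t. exp (\<i> * of_real (\<sigma> * t))) ` {0<..<pi}"
      by (metis image_eqI)
  qed
qed

lemma half_circle_interval:
  assumes "\<sigma> \<in> {-1, 1}"
  shows "half_circle \<sigma> \<in> circle_intervals"
proof -
  have "connected (half_circle \<sigma>)"
    unfolding half_circle_exp_image[OF assms]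
    by (intro connected_continuous_image continuous_intros) simp
  moreover have "half_circle \<sigma> \<noteq> {}"
    unfolding half_circle_exp_image[OF assms] using pi_gt_zero by (simp add: not_le)
  moreover have "openin (top_of_set circle) (half_circle \<sigma>)"
  proof -
    have "open {z. 0 < \<sigma> * Im z}"
      by (intro open_Collect_less continuous_intros)
    moreover have "half_circle \<sigma> = circle \<inter> {z. 0 < \<sigma> * Im z}"
      by (auto simp: half_circle_def)
    ultimately show ?thesis
      by (metis openin_open_Int)
  qed
  moreover have "closure (half_circle \<sigma>) \<noteq> circle"
  proof -
    have "closure (half_circle \<sigma>) \<subseteq> {z. 0 \<le> \<sigma> * Im z}"
      by (intro closure_minimal closed_Collect_le continuous_intros)
        (auto simp: half_circle_def)
    moreover have "- (\<sigma> * \<i>) \<in> circle" "\<not> 0 \<le> \<sigma> * Im (- (\<sigma> * \<i>))"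
      using assms by (auto simp: circle_def)
    ultimately show ?thesis by blast
  qed
  ultimately show ?thesis
    by (auto simp: circle_intervals_def half_circle_def)
qed

lemma half_circle_subset_iff:
  assumes "\<sigma> \<in> {-1, 1}" "\<tau> \<in> {-1, 1}"
  shows "half_circle \<sigma> \<subseteq> half_circle \<tau> \<longleftrightarrow> \<sigma> = \<tau>"
proof
  assume "half_circle \<sigma> \<subseteq> half_circle \<tau>"
  moreover have "of_real \<sigma> * \<i> \<in> half_circle \<sigma>"
    using assms(1) by (auto simp: half_circle_def circle_def)
  ultimately have "0 < \<tau> * \<sigma>"
    by (auto simp: half_circle_def)
  then show "\<sigma> = \<tau>"
    using assms by auto
qed simp

lemma half_circle_approaches_real_points:
  assumes "\<sigma> \<in> {-1, 1}" "z \<in> circle" "Im z = 0" "e > 0"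
  shows "\<exists>w\<in>half_circle \<sigma>. dist w z < e"
proof -
  define t where "t = min (e / 2) (pi / 2)"
  have t: "0 < t" "t < pi" "t < e"
    using assms(4) pi_gt_zero by (auto simp: t_def min_def)
  obtain r where r: "z = of_real r" "\<bar>r\<bar> = 1"
    using assms(2,3) by (metis circle_def complex_is_Real_iff mem_sphere_0 norm_of_real of_real_Re)
  define s where "s = \<sigma> * r"
  have s: "s \<in> {-1, 1}" "\<sigma> * r * s = 1"
    using assms(1) r(2) by (auto simp: s_def abs_if split: if_splits)
  define w where "w = z * exp (\<i> * of_real (s * t))"
  have "sin (s * t) = s * sin t"
    using s(1) by auto
  then have "\<sigma> * Im w = sin t"
    using s(2) by (simp add: w_def r(1) Im_exp)
  moreover have "sin t > 0" using t by (simp add: sin_gt_zero)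
  moreover have "cmod w = 1" using assms(2) by (simp add: w_def circle_def norm_mult)
  moreover have "w - z = z * (exp (\<i> * of_real (s * t)) - 1)"
    by (simp add: w_def algebra_simps)
  then have "dist w z = 2 * \<bar>sin (s * t / 2)\<bar>"
    using assms(2) by (simp only: dist_norm norm_mult dist_exp_i_1) (simp add: circle_def)
  moreover have "\<dots> \<le> \<bar>s * t\<bar>"
    using abs_sin_x_le_abs_x[of "s * t / 2"] by simp
  ultimately show ?thesis
    using s(1) t by (intro bexI[of _ w]) (auto simp: half_circle_def circle_def)
qed

lemma closure_two_half_circles:
  assumes "half_circle 1 \<subseteq> I" "half_circle (-1) \<subseteq> I" "I \<subseteq> circle"
  shows "closure I = circle"
proof
  show "closure I \<subseteq> circle"
    using closure_mono[OF assms(3)] by (simp add: circle_def)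
  show "circle \<subseteq> closure I"
  proof
    fix z assume z: "z \<in> circle"
    show "z \<in> closure I"
    proof (cases "Im z = 0")
      case True
      then show ?thesis
        using half_circle_approaches_real_points[of 1 z] z assms(1)
        by (auto simp: closure_approachable)
    next
      case False
      then have "z \<in> half_circle 1 \<or> z \<in> half_circle (-1)"
        using z by (auto simp: half_circle_def)
      then show ?thesis
        using assms closure_subset by blast
    qed
  qed
qed

lemma dilation_invariant_interval:
  assumes I: "I \<in> circle_intervals" and inv: "\<forall>k>0. circle_dilation k ` I = I"
  shows "\<exists>\<sigma>\<in>{-1, 1}. I = half_circle \<sigma>"
proof -
  have sub: "I \<subseteq> circle" "I \<noteq> {}" "closure I \<noteq> circle"
    and open_I: "openin (top_of_set circle) I"
    using I by (auto simp: circle_intervals_def)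
  have orbit: "half_circle \<sigma> \<subseteq> I" if "z \<in> I" "z \<in> half_circle \<sigma>" for z \<sigma>
    using circle_dilation_transitive[OF that(2)] inv that(1) by blast
  have not_both: "\<not> (half_circle 1 \<subseteq> I \<and> half_circle (-1) \<subseteq> I)"
    using closure_two_half_circles sub by blast
  have sign: "z \<in> half_circle (sgn (Im z))" "sgn (Im z) \<in> {-1, 1}" if "z \<in> I" for z
  proof -
    have "Im z \<noteq> 0"
    proof
      assume "Im z = 0"
      obtain e where "e > 0" and e: "\<forall>w\<in>circle. dist w z < e \<longrightarrow> w \<in> I"
        using open_I \<open>z \<in> I\<close> unfolding openin_euclidean_subtopology_iff by blast
      have "half_circle \<sigma> \<subseteq> I" if "\<sigma> \<in> {-1, 1}" for \<sigma>
        using half_circle_approaches_real_points[OF that _ \<open>Im z = 0\<close> \<open>e > 0\<close>]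
          \<open>z \<in> I\<close> sub(1) e orbit by (fastforce simp: half_circle_def)
      then show False using not_both by auto
    qed
    then show "z \<in> half_circle (sgn (Im z))" "sgn (Im z) \<in> {-1, 1}"
      using that sub(1) by (auto simp: half_circle_def sgn_real_def)
  qed
  obtain z where "z \<in> I" using sub(2) by blast
  have "I \<subseteq> half_circle (sgn (Im z))"
  proof
    fix y assume "y \<in> I"
    have "half_circle (sgn (Im y)) \<subseteq> I" "half_circle (sgn (Im z)) \<subseteq> I"
      using orbit sign \<open>y \<in> I\<close> \<open>z \<in> I\<close> by blast+
    then have "sgn (Im y) = sgn (Im z)"
      using sign(2)[OF \<open>y \<in> I\<close>] sign(2)[OF \<open>z \<in> I\<close>] not_both by auto
    then show "y \<in> half_circle (sgn (Im z))"
      using sign(1)[OF \<open>y \<in> I\<close>] by simp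
  qed
  then show ?thesis
    using sign[OF \<open>z \<in> I\<close>] orbit[OF \<open>z \<in> I\<close>] by blast
qed

theorem circle_intervals_no_covariant_pfs: "\<not> has_covariant_pfs circle_intervals moebius_group"
proof
  assume "has_covariant_pfs circle_intervals moebius_group"
  then obtain P where P: "covariant_pfs circle_intervals moebius_group P"
    by (auto simp: has_covariant_pfs_def)
  have K: "half_circle 1 \<in> circle_intervals" "half_circle (-1) \<in> circle_intervals"
    by (simp_all add: half_circle_interval)
  define w where "w = P (half_circle 1) (half_circle (-1))"
  have path: "is_path circle_intervals (half_circle 1) (half_circle (-1)) w"
    using P K by (simp add: covariant_pfs_def w_def)
  have "\<i> \<in> half_circle 1" "\<i> \<notin> half_circle (-1)"
    by (simp_all add: half_circle_def circle_def)
  then obtain b where b: "b \<in> set (reduce w)"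
    using reduce_path_nonempty[OF path] by (metis list.set_sel(1))
  have bT: "b \<in> T1 circle_intervals"
    using b set_reduce path by (auto simp: is_path_def)
  have fixed: "circle_dilation k ` supp1 b = supp1 b \<and> circle_dilation k ` bd0 b = bd0 b"
    if "k > 0" for k
  proof -
    have "FK_eq (map (act1 (circle_dilation k)) w)
        (P (circle_dilation k ` half_circle 1) (circle_dilation k ` half_circle (-1)))"
      using P K circle_dilation_moebius[OF that] by (simp add: covariant_pfs_def w_def)
    then have "FK_eq (map (act1 (circle_dilation k)) w) w"
      by (simp add: circle_dilation_half_circle[OF that] w_def)
    moreover have "set w \<subseteq> {b. supp1 b \<subseteq> circle \<and> bd0 b \<subseteq> circle \<and> bd1 b \<subseteq> circle}"
      using path by (auto simp: is_path_def T1_def circle_intervals_def)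
    ultimately have "map (act1 (circle_dilation k)) (reduce w) = map id (reduce w)"
      using reduce_fixed_by_act1[OF inj_on_circle_dilation[OF that]] by simp
    then have "act1 (circle_dilation k) b = b"
      using b by (simp only: map_eq_conv) simp
    then show ?thesis
      by (simp add: act1_def supp1_def bd0_def prod_eq_iff)
  qed
  have "supp1 b \<in> circle_intervals" "bd0 b \<in> circle_intervals" "bd0 b \<subset> supp1 b"
    using bT by (auto simp: T1_def)
  then show False
    using dilation_invariant_interval fixed half_circle_subset_iff by (metis psubset_eq)
qed

theorem corollary4p6:
  shows "has_covariant_pfs double_cones poincare_group \<and>
         \<not> has_covariant_pfs circle_intervals moebius_group"
  using double_cones_covariant_pfs circle_intervals_no_covariant_pfs by blast

end
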